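(* Let $n,k,n',k'$ be integers with $\frac{n+1}{2}<k<n$, $n/k=n'/k'$, and $k,k'$ both even. Let $G$ and $G'$ be graphs with $H_{n,k}\subseteq G\subseteq H'_{n,k}$ and $H_{n',k'}\subseteq G'\subseteq H'_{n',k'}$. If there is a homomorphism $G\to G'$, then $n'$ and $k'$ are integer multiples of $n$ and $k$, respectively. Moreover, any such homomorphism is injective, and therefore $G$ is (isomorphic to) a subgraph of $G'$.
   Context: For integers $m\ge j$ with $j$ even, $H_{m,j}$ is the graph whose vertices are the even-weight elements of $\mathbb{Z}_2^m$, with $x\sim y$ iff the Hamming distance $d(x,y)$ equals $j$; and $H'_{m,j}$ is the graph on the same vertex set with $x\sim y$ iff $d(x,y)\ge j$. The inclusions $H_{m,j}\subseteq G\subseteq H'_{m,j}$ mean $G$ has the same vertex set and its edge set lies between the two edge sets. A homomorphism is an adjacency-preserving map between vertex sets. *)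

theory Defs
  imports Complex_Main
begin

text \<open>Elements of Z_2^m are represented by their supports, i.e. subsets of {0..<m}.
  The Hamming distance is the cardinality of the symmetric difference.\<close>

definition even_cube :: "nat \<Rightarrow> nat set set" where
  "even_cube m = {x. x \<subseteq> {0..<m} \<and> even (card x)}"

definition hamming :: "nat set \<Rightarrow> nat set \<Rightarrow> nat" where
  "hamming x y = card ((x - y) \<union> (y - x))"

text \<open>A simple graph on a vertex set V is given by a symmetric adjacency relation
  supported on V.  The predicate below says that E is a graph on the vertex set of
  H_{m,j} with H_{m,j} \<subseteq> E \<subseteq> H'_{m,j}.\<close>

definition between_graph :: "nat \<Rightarrow> nat \<Rightarrow> (nat set \<Rightarrow> nat set \<Rightarrow> bool) \<Rightarrow> bool" where
  "between_graph m j E \<longleftrightarrow>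
     (\<forall>x y. E x y \<longrightarrow> E y x) \<and>
     (\<forall>x\<in>even_cube m. \<forall>y\<in>even_cube m. hamming x y = j \<longrightarrow> E x y) \<and>
     (\<forall>x y. E x y \<longrightarrow> x \<in> even_cube m \<and> y \<in> even_cube m \<and> hamming x y \<ge> j)"

definition graph_hom ::
  "'a set \<Rightarrow> ('a \<Rightarrow> 'a \<Rightarrow> bool) \<Rightarrow> 'b set \<Rightarrow> ('b \<Rightarrow> 'b \<Rightarrow> bool) \<Rightarrow> ('a \<Rightarrow> 'b) \<Rightarrow> bool" where
  "graph_hom V E V' E' f \<longleftrightarrow> f ` V \<subseteq> V' \<and> (\<forall>x\<in>V. \<forall>y\<in>V. E x y \<longrightarrow> E' (f x) (f y))"

end

(*
  For a target coordinate i, the sign x \<mapsto> (-1)^[i \<in> f x] is a +-1 function on the even cube;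
  lift it to all of Pow {..<n} as a function invariant under flipping the point 0.  Its
  correlation over pairs at distance k equals 2^n \<Sum>_S g(S)^2 K_k(|S|), and for even
  k > (n+1)/2 the Krawtchouk number K_k(j) is smallest exactly at j = 1 and j = n - 1, so the
  correlation is at least 2^n K_k(1).  Summed over the n' coordinates, the correlations equal a sum
  of n' - 2 d(f x, f y) over k-edges, which the expansion d(f x, f y) \<ge> k' and the ratio
  n'/k' = n/k bound by exactly n' 2^n K_k(1).  Hence everything is tight: each k-edge is sent to
  distance k', and each coordinate has its spectrum on singletons {a} and on {..<n} - {0}.  These
  frequencies form a Sidon family, and a +-1 function with Sidon spectrum is a single character,
  so every target coordinate i copies a source coordinate \<sigma> i up to a fixed flip.  All fibres of
  \<sigma> then have the same size m > 0, giving n' = n m, k' = k m and injectivity of f.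
*)

theory Submission
  imports Defs
begin

section \<open>Krawtchouk numbers\<close>

text \<open>\<open>krawtchouk n d j\<close> is \<open>K\<^sub>d(j) = \<Sum>\<^sub>i (-1)\<^sup>i (j choose i) (n - j choose d - i)\<close>; the recursion in \<open>j\<close>
  removes one point of \<open>S\<close> from \<open>sign_sum\<close> below.\<close>

fun krawtchouk :: "nat \<Rightarrow> nat \<Rightarrow> nat \<Rightarrow> int" where
  "krawtchouk n 0 j = 1"
| "krawtchouk n (Suc d) 0 = int (n choose Suc d)"
| "krawtchouk 0 (Suc d) (Suc j) = 0"
| "krawtchouk (Suc n) (Suc d) (Suc j) = krawtchouk n (Suc d) j - krawtchouk n d j"

lemma krawtchouk_0_right: "krawtchouk n d 0 = int (n choose d)"
  by (cases d) auto

abbreviation subsets_of_card :: "'a set \<Rightarrow> nat \<Rightarrow> 'a set set" where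
  "subsets_of_card A d \<equiv> {z. z \<subseteq> A \<and> card z = d}"

definition sign_sum :: "'a set \<Rightarrow> 'a set \<Rightarrow> nat \<Rightarrow> int" where
  "sign_sum A S d = (\<Sum>z\<in>subsets_of_card A d. (-1) ^ card (z \<inter> S))"

lemma finite_subsets_of_card: "finite A \<Longrightarrow> finite (subsets_of_card A d)"
  by (rule finite_subset[of _ "Pow A"]) auto

lemma subsets_of_card_0: "finite A \<Longrightarrow> subsets_of_card A 0 = {{}}"
  by (auto dest: finite_subset)

lemma subsets_of_card_Suc:
  assumes "finite A" "a \<in> A"
  shows "subsets_of_card A (Suc e) =
    subsets_of_card (A - {a}) (Suc e) \<union> insert a ` subsets_of_card (A - {a}) e"
proof (intro equalityI subsetI)
  fix z assume z: "z \<in> subsets_of_card A (Suc e)"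
  show "z \<in> subsets_of_card (A - {a}) (Suc e) \<union> insert a ` subsets_of_card (A - {a}) e"
  proof (cases "a \<in> z")
    case True
    with z assms(1) have "z = insert a (z - {a})" "z - {a} \<in> subsets_of_card (A - {a}) e"
      by (auto dest: finite_subset)
    then show ?thesis by blast
  qed (use z in auto)
next
  fix z assume "z \<in> subsets_of_card (A - {a}) (Suc e) \<union> insert a ` subsets_of_card (A - {a}) e"
  then consider "z \<in> subsets_of_card (A - {a}) (Suc e)"
    | w where "w \<subseteq> A - {a}" "card w = e" "z = insert a w"
    by blast
  then show "z \<in> subsets_of_card A (Suc e)"
  proof cases
    case 2
    then have "finite w" "a \<notin> w" using assms(1) finite_subset by blast+
    with 2 assms show ?thesis by auto
  qed auto
qed

lemma sum_subsets_of_card_Suc: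
  assumes "finite A" "a \<in> A"
  shows "(\<Sum>z\<in>subsets_of_card A (Suc e). F z) =
    (\<Sum>z\<in>subsets_of_card (A - {a}) (Suc e). F z) + (\<Sum>w\<in>subsets_of_card (A - {a}) e. F (insert a w))"
proof -
  have "inj_on (insert a) (subsets_of_card (A - {a}) e)"
    by (rule inj_onI) (metis Diff_iff insert_ident mem_Collect_eq singletonI subset_iff)
  moreover have "subsets_of_card (A - {a}) (Suc e) \<inter> insert a ` subsets_of_card (A - {a}) e = {}"
    by auto
  ultimately show ?thesis
    using assms by (simp add: subsets_of_card_Suc sum.union_disjoint finite_subsets_of_card sum.reindex)
qed

lemma sign_sum_0: "finite A \<Longrightarrow> sign_sum A S 0 = 1"
  by (simp add: sign_sum_def subsets_of_card_0)

lemma sign_sum_empty: "finite A \<Longrightarrow> sign_sum A {} d = int (card A choose d)"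
  by (simp add: sign_sum_def n_subsets)

lemma sign_sum_Suc:
  assumes "finite A" "a \<in> S" "S \<subseteq> A"
  shows "sign_sum A S (Suc e) = sign_sum (A - {a}) (S - {a}) (Suc e) - sign_sum (A - {a}) (S - {a}) e"
proof -
  have "a \<in> A" using assms by blast
  have without_a: "(\<Sum>z\<in>subsets_of_card (A - {a}) m. (-1::int) ^ card (z \<inter> S)) =
      (\<Sum>z\<in>subsets_of_card (A - {a}) m. (-1) ^ card (z \<inter> (S - {a})))" for m
    by (intro sum.cong refl arg_cong[where f = "\<lambda>X. (-1) ^ card X"]) auto
  have with_a: "(\<Sum>w\<in>subsets_of_card (A - {a}) e. (-1::int) ^ card (insert a w \<inter> S)) =
      - (\<Sum>w\<in>subsets_of_card (A - {a}) e. (-1) ^ card (w \<inter> (S - {a})))"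
    unfolding sum_negf[symmetric]
  proof (rule sum.cong[OF refl])
    fix w assume "w \<in> subsets_of_card (A - {a}) e"
    then have "finite (w \<inter> (S - {a}))" using assms(1) by (auto dest: finite_subset)
    moreover have "insert a w \<inter> S = insert a (w \<inter> (S - {a}))" using assms(2) by auto
    ultimately show "(-1::int) ^ card (insert a w \<inter> S) = - ((-1) ^ card (w \<inter> (S - {a})))"
      by simp
  qed
  show ?thesis
    unfolding sign_sum_def sum_subsets_of_card_Suc[OF assms(1) \<open>a \<in> A\<close>] without_a with_a by simp
qed

lemma sign_sum_eq_krawtchouk:
  "finite A \<Longrightarrow> S \<subseteq> A \<Longrightarrow> sign_sum A S d = krawtchouk (card A) d (card S)"
proof (induction "card S" arbitrary: A S d)
  case 0
  then have "S = {}" by (auto dest: finite_subset)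
  with 0 show ?case by (simp add: sign_sum_empty krawtchouk_0_right)
next
  case (Suc j)
  then obtain a where a: "a \<in> S" by fastforce
  with Suc.prems have "a \<in> A" "finite S" by (auto dest: finite_subset)
  then have cards: "card A = Suc (card (A - {a}))" "card (S - {a}) = j"
    using Suc a by (metis card_Suc_Diff1, simp)
  show ?case
  proof (cases d)
    case (Suc e)
    have IH: "sign_sum (A - {a}) (S - {a}) d' = krawtchouk (card (A - {a})) d' j" for d'
      using Suc.hyps(1)[of "S - {a}" "A - {a}"] Suc.prems cards by auto
    show ?thesis
      using sign_sum_Suc[OF Suc.prems(1) a Suc.prems(2)] IH cards Suc Suc.hyps(2)[symmetric] by simp
  qed (use Suc.prems sign_sum_0 in simp)
qed

lemma minus_one_power_diff: "c \<le> d \<Longrightarrow> (-1::int) ^ (d - c) = (-1) ^ d * (-1) ^ c"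
  by (simp add: minus_one_power_iff)

lemma sign_sum_Diff:
  assumes "finite A" "S \<subseteq> A"
  shows "sign_sum A (A - S) d = (-1) ^ d * sign_sum A S d"
  unfolding sign_sum_def sum_distrib_left
proof (rule sum.cong[OF refl])
  fix z assume z: "z \<in> subsets_of_card A d"
  then have "finite z" using assms(1) by (auto dest: finite_subset)
  moreover have "z \<inter> (A - S) = z - (z \<inter> S)" using z by auto
  ultimately have "card (z \<inter> (A - S)) = d - card (z \<inter> S)" "card (z \<inter> S) \<le> d"
    using z by (auto simp: card_Diff_subset card_mono)
  then show "(-1::int) ^ card (z \<inter> (A - S)) = (-1) ^ d * (-1) ^ card (z \<inter> S)"
    by (simp add: minus_one_power_diff)
qed

lemma sign_sum_card_diff:
  assumes "finite A" "S \<subseteq> A" "d \<le> card A"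
  shows "sign_sum A S (card A - d) = (-1) ^ card S * sign_sum A S d"
  unfolding sign_sum_def sum_distrib_left
proof (rule sum.reindex_bij_witness[of _ "\<lambda>w. A - w" "\<lambda>w. A - w"])
  fix z assume z: "z \<in> subsets_of_card A (card A - d)"
  then show "A - (A - z) = z" by auto
  have "finite z" using z assms(1) by (auto dest: finite_subset)
  then show "A - z \<in> subsets_of_card A d" using z assms by (simp add: card_Diff_subset)
  have "finite S" using assms by (auto dest: finite_subset)
  moreover have "(A - z) \<inter> S = S - (z \<inter> S)" using assms z by auto
  ultimately have "card ((A - z) \<inter> S) = card S - card (z \<inter> S)" "card (z \<inter> S) \<le> card S"
    by (auto simp: card_Diff_subset card_mono)
  then show "(-1::int) ^ card S * (-1) ^ card ((A - z) \<inter> S) = (-1) ^ card (z \<inter> S)"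
    by (simp add: minus_one_power_iff)
next
  fix w assume w: "w \<in> subsets_of_card A d"
  then show "A - (A - w) = w" by auto
  have "finite w" using w assms(1) by (auto dest: finite_subset)
  then show "A - w \<in> subsets_of_card A (card A - d)" using w by (simp add: card_Diff_subset)
qed

lemma krawtchouk_reflect_right:
  assumes "j \<le> n" shows "krawtchouk n d (n - j) = (-1) ^ d * krawtchouk n d j"
proof -
  have "krawtchouk n d (n - j) = sign_sum {0..<n} ({0..<n} - {0..<j}) d"
    using assms by (subst sign_sum_eq_krawtchouk) auto
  also have "\<dots> = (-1) ^ d * sign_sum {0..<n} {0..<j} d"
    using assms by (intro sign_sum_Diff) auto
  also have "\<dots> = (-1) ^ d * krawtchouk n d j"
    using assms by (subst sign_sum_eq_krawtchouk) auto
  finally show ?thesis .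
qed

lemma krawtchouk_reflect_left:
  assumes "j \<le> n" "d \<le> n" shows "krawtchouk n (n - d) j = (-1) ^ j * krawtchouk n d j"
proof -
  have "krawtchouk n (n - d) j = sign_sum {0..<n} {0..<j} (card {0..<n} - d)"
    using assms by (subst sign_sum_eq_krawtchouk) auto
  also have "\<dots> = (-1) ^ j * sign_sum {0..<n} {0..<j} d"
    using assms by (subst sign_sum_card_diff) auto
  also have "\<dots> = (-1) ^ j * krawtchouk n d j"
    using assms by (subst sign_sum_eq_krawtchouk) auto
  finally show ?thesis .
qed

text \<open>Pascal's rule in the length, obtained from the recursion in \<open>j\<close> through the reflection
  \<open>j \<mapsto> n - j\<close>.\<close>

lemma krawtchouk_Suc_length:
  assumes "j \<le> n"
  shows "krawtchouk (Suc n) (Suc d) j = krawtchouk n (Suc d) j + krawtchouk n d j"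
proof -
  have sq: "(-1::int) ^ D * (-1) ^ D = 1" for D
    by (simp flip: power_add)
  have "krawtchouk (Suc n) (Suc d) j = (-1) ^ Suc d * krawtchouk (Suc n) (Suc d) (Suc n - j)"
    using krawtchouk_reflect_right[of j "Suc n" "Suc d"] assms sq[of "Suc d"]
    by (simp add: mult.assoc[symmetric])
  also have "\<dots> = (-1) ^ Suc d * (krawtchouk n (Suc d) (n - j) - krawtchouk n d (n - j))"
    using assms by (simp add: Suc_diff_le)
  also have "\<dots> = krawtchouk n (Suc d) j + krawtchouk n d j"
    using assms sq[of d] by (simp add: krawtchouk_reflect_right algebra_simps)
  finally show ?thesis .
qed

lemma krawtchouk_middle_odd:
  assumes "odd j" "j \<le> 2 * d" shows "krawtchouk (2 * d) d j = 0"
  using krawtchouk_reflect_left[of j "2 * d" d] assms by simp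

lemma krawtchouk_1:
  assumes "0 < d" "0 < n"
  shows "krawtchouk n d 1 = int (n - 1 choose d) - int (n - 1 choose (d - 1))"
  using assms by (cases n; cases d) (auto simp: krawtchouk_0_right)

lemma krawtchouk_1_pos:
  assumes "2 * d < n" shows "krawtchouk n d 1 > 0"
  using assms binomial_strict_mono[of "d - 1" d "n - 1"] krawtchouk_1[of d n] by (cases "d = 0") auto

text \<open>By induction on the length; at the boundary \<open>n = 2 d + 1\<close> the induction hypothesis for \<open>d\<close>
  is replaced by the vanishing of \<open>K\<^sub>d(j)\<close> at odd \<open>j\<close> for length \<open>2 d\<close>.\<close>

lemma krawtchouk_abs_le_1:
  "2 * d < n \<Longrightarrow> 1 \<le> j \<Longrightarrow> j < n \<Longrightarrow> \<bar>krawtchouk n d j\<bar> \<le> krawtchouk n d 1"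
proof (induction n arbitrary: d j)
  case (Suc m)
  show ?case
  proof (cases "d = 0 \<or> j = 1")
    case True
    then show ?thesis using krawtchouk_1_pos[of d "Suc m"] Suc.prems by auto
  next
    case False
    then obtain e i where d: "d = Suc e" and j: "j = Suc i" "1 \<le> i" "i < m"
      using Suc.prems by (cases d; cases j) auto
    have rec: "krawtchouk (Suc m) d j = krawtchouk m d i - krawtchouk m e i"
      using d j by simp
    have one: "krawtchouk (Suc m) d 1 = krawtchouk m d 1 + krawtchouk m e 1"
      using krawtchouk_Suc_length[of 1 m e] d j by simp
    have IH_e: "\<bar>krawtchouk m e i'\<bar> \<le> krawtchouk m e 1" if "1 \<le> i'" "i' < m" for i'
      using Suc.IH[of e i'] that Suc.prems d by simp
    show ?thesis
    proof (cases "2 * d < m")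
      case True
      then show ?thesis using Suc.IH[of d i] j rec one IH_e[OF j(2,3)] by linarith
    next
      case False
      then have m: "m = 2 * d" using Suc.prems by simp
      have "krawtchouk m d 1 = 0" using m d krawtchouk_middle_odd[of 1 d] by simp
      moreover have "\<bar>krawtchouk (Suc m) d j\<bar> \<le> krawtchouk m e 1"
      proof (cases "odd i")
        case True
        then show ?thesis using rec IH_e[OF j(2,3)] krawtchouk_middle_odd[of i d] m j by simp
      next
        case False
        then have "odd j" "j < m" using j m by presburger+
        then show ?thesis
          using krawtchouk_Suc_length[of j m e] krawtchouk_middle_odd[of j d] IH_e[of j] m d j
          by simp
      qed
      ultimately show ?thesis using one by simp
    qed
  qed
qed simp

lemma krawtchouk_abs_less_1:
  "0 < d \<Longrightarrow> 2 * d + 2 \<le> n \<Longrightarrow> 2 \<le> j \<Longrightarrow> j \<le> n - 2 \<Longrightarrow> \<bar>krawtchouk n d j\<bar> < krawtchouk n d 1"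
proof (induction n arbitrary: d j)
  case (Suc m)
  obtain e i where d: "d = Suc e" and j: "j = Suc i" "1 \<le> i" "i \<le> m - 2"
    using Suc.prems by (cases d; cases j) auto
  have rec: "krawtchouk (Suc m) d j = krawtchouk m d i - krawtchouk m e i"
    using d j by simp
  have one: "krawtchouk (Suc m) d 1 = krawtchouk m d 1 + krawtchouk m e 1"
    using krawtchouk_Suc_length[of 1 m e] d Suc.prems by simp
  have le_d: "\<bar>krawtchouk m d i\<bar> \<le> krawtchouk m d 1"
    and le_e: "\<bar>krawtchouk m e i\<bar> \<le> krawtchouk m e 1"
    using krawtchouk_abs_le_1[of d m i] krawtchouk_abs_le_1[of e m i] Suc.prems d j by simp_all
  show ?case
  proof (cases "i = 1")
    case True
    then show ?thesis
      using krawtchouk_1_pos[of d m] krawtchouk_1_pos[of e m] Suc.prems d rec one by simp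
  next
    case False
    show ?thesis
    proof (cases "2 * d + 2 \<le> m")
      case True
      then show ?thesis using Suc.IH[of d i] False Suc.prems j rec one le_e by linarith
    next
      case False
      then show ?thesis using Suc.IH[of e i] \<open>i \<noteq> 1\<close> Suc.prems d j rec one le_d by linarith
    qed
  qed
qed simp

text \<open>For even \<open>k > (n + 1) / 2\<close> the minimum of \<open>j \<mapsto> K\<^sub>k(j)\<close> on \<open>{0..n}\<close> is attained
  exactly at \<open>j = 1\<close> and \<open>j = n - 1\<close>: reflecting \<open>k\<close> to \<open>n - k < n / 2\<close> turns it into the
  maximality of \<open>\<bar>K\<^sub>n\<^sub>-\<^sub>k(j)\<bar>\<close> at \<open>j = 1\<close>, where \<open>K\<^sub>n\<^sub>-\<^sub>k(1) > 0\<close> gets the sign \<open>-1\<close>.\<close>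

lemma krawtchouk_min_at_1:
  assumes "even k" "n + 1 < 2 * k" "k < n" "j \<le> n"
  shows "krawtchouk n k 1 \<le> krawtchouk n k j"
    and "j \<noteq> 1 \<Longrightarrow> j \<noteq> n - 1 \<Longrightarrow> krawtchouk n k 1 < krawtchouk n k j"
proof -
  define d where "d = n - k"
  have d: "0 < d" "2 * d + 2 \<le> n" "k = n - d" "d \<le> n"
    using assms unfolding d_def by auto
  have reflect: "krawtchouk n k j' = (-1) ^ j' * krawtchouk n d j'" if "j' \<le> n" for j'
    using krawtchouk_reflect_left[OF that d(4)] d(3) by simp
  have at_1: "krawtchouk n k 1 < 0"
    using reflect[of 1] krawtchouk_1_pos[of d n] d assms by simp
  have ends: "krawtchouk n k n = krawtchouk n k 0" "krawtchouk n k (n - 1) = krawtchouk n k 1"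
    using krawtchouk_reflect_right[of 0 n k] krawtchouk_reflect_right[of 1 n k] assms by simp_all
  show strict: "krawtchouk n k 1 < krawtchouk n k j" if "j \<noteq> 1" "j \<noteq> n - 1"
  proof (cases "j = 0 \<or> j = n")
    case True
    then show ?thesis using ends at_1 by (auto simp: krawtchouk_0_right)
  next
    case False
    then have "2 \<le> j" "j \<le> n - 2" using that assms(4) by auto
    then have "\<bar>krawtchouk n d j\<bar> < krawtchouk n d 1"
      using krawtchouk_abs_less_1[of d n j] d by simp
    moreover have "- \<bar>krawtchouk n d j\<bar> \<le> (-1) ^ j * krawtchouk n d j"
      by (cases "even j") auto
    ultimately show ?thesis
      using reflect[OF assms(4)] reflect[of 1] assms by simp
  qed
  show "krawtchouk n k 1 \<le> krawtchouk n k j"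
    using strict ends by (cases "j = 1 \<or> j = n - 1") force+
qed

lemma krawtchouk_1_closed_form:
  assumes "0 < k" "k < n"
  shows "real n * krawtchouk n k 1 = real (n choose k) * (real n - 2 * real k)"
proof -
  have "(n - k) * (n choose k) = n * (n - 1 choose k)" "k * (n choose k) = n * (n - 1 choose (k - 1))"
    using binomial_absorb_comp[of n k] binomial_absorption[of "k - 1" n] assms by simp_all
  then have "(real n - real k) * real (n choose k) = real n * real (n - 1 choose k)"
    "real k * real (n choose k) = real n * real (n - 1 choose (k - 1))"
    using assms by (simp_all flip: of_nat_mult of_nat_diff)
  moreover have "real_of_int (krawtchouk n k 1) = real (n - 1 choose k) - real (n - 1 choose (k - 1))"
    using krawtchouk_1[of k n] assms by simp
  ultimately show ?thesis
    by (simp only:) (simp add: algebra_simps)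
qed

section \<open>Fourier analysis on the cube\<close>

definition walsh :: "'a set \<Rightarrow> 'a set \<Rightarrow> real" where
  "walsh S x = (-1) ^ card (S \<inter> x)"

lemma walsh_commute: "walsh S x = walsh x S"
  unfolding walsh_def by (simp add: Int_commute)

lemma walsh_empty [simp]: "walsh S {} = 1" "walsh {} x = 1"
  unfolding walsh_def by simp_all

lemma walsh_singleton: "walsh {j} x = (if j \<in> x then -1 else 1)"
  unfolding walsh_def by simp

lemma walsh_mult:
  assumes "finite x"
  shows "walsh S x * walsh T x = walsh (sym_diff S T) x"
proof -
  have "card (S \<inter> x) = card ((S - T) \<inter> x) + card (S \<inter> T \<inter> x)"
    "card (T \<inter> x) = card ((T - S) \<inter> x) + card (S \<inter> T \<inter> x)"
    "card (sym_diff S T \<inter> x) = card ((S - T) \<inter> x) + card ((T - S) \<inter> x)"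
    using assms by (subst card_Un_disjoint[symmetric]; auto intro: arg_cong[where f = card])+
  then show ?thesis
    unfolding walsh_def by (simp add: power_add minus_one_power_iff)
qed

lemma walsh_sym_diff_right:
  "finite S \<Longrightarrow> walsh S (sym_diff x z) = walsh S x * walsh S z"
  using walsh_mult[of S x z] by (simp add: walsh_commute)

lemma walsh_sym_diff_singleton:
  assumes "finite S" "r \<in> S"
  shows "walsh S (sym_diff x {r}) = - walsh S x"
  using walsh_sym_diff_right[of S x "{r}"] assms
  by (simp add: walsh_def)
lemma sum_Pow_flip_antisymmetric:
  fixes h :: "'a set \<Rightarrow> real"
  assumes "r \<in> A" "\<And>x. x \<subseteq> A \<Longrightarrow> h (sym_diff x {r}) = - h x"
  shows "(\<Sum>x\<in>Pow A. h x) = 0"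
proof -
  have "(\<Sum>x\<in>Pow A. h x) = (\<Sum>x\<in>Pow A. - h x)"
    by (rule sum.reindex_bij_witness[of _ "\<lambda>x. sym_diff x {r}" "\<lambda>x. sym_diff x {r}"])
      (use assms in auto)
  then show ?thesis by (simp add: sum_negf)
qed

lemma sum_walsh:
  assumes "finite A" "R \<subseteq> A"
  shows "(\<Sum>x\<in>Pow A. walsh R x) = (if R = {} then 2 ^ card A else 0)"
proof (cases "R = {}")
  case False
  then obtain r where "r \<in> R" by auto
  moreover have "finite R" using assms finite_subset by blast
  ultimately show ?thesis
    using assms False sum_Pow_flip_antisymmetric[of r A "walsh R"]
    by (auto simp: walsh_sym_diff_singleton)
qed (use assms in \<open>simp add: card_Pow\<close>)

lemma walsh_orthogonal:
  assumes "finite A" "S \<subseteq> A" "T \<subseteq> A"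
  shows "(\<Sum>x\<in>Pow A. walsh S x * walsh T x) = (if S = T then 2 ^ card A else 0)"
proof -
  have "(\<Sum>x\<in>Pow A. walsh S x * walsh T x) = (\<Sum>x\<in>Pow A. walsh (sym_diff S T) x)"
    using assms by (intro sum.cong refl walsh_mult) (auto dest: finite_subset)
  also have "\<dots> = (if S = T then 2 ^ card A else 0)"
    using assms by (subst sum_walsh) auto
  finally show ?thesis .
qed

definition fourier_coeff :: "'a set \<Rightarrow> ('a set \<Rightarrow> real) \<Rightarrow> 'a set \<Rightarrow> real" where
  "fourier_coeff A g S = (\<Sum>x\<in>Pow A. g x * walsh S x) / 2 ^ card A"

lemma fourier_inversion:
  assumes "finite A" "x \<subseteq> A"
  shows "(\<Sum>S\<in>Pow A. fourier_coeff A g S * walsh S x) = g x"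
proof -
  have "(\<Sum>S\<in>Pow A. fourier_coeff A g S * walsh S x)
      = (\<Sum>S\<in>Pow A. \<Sum>y\<in>Pow A. g y * (walsh y S * walsh x S)) / 2 ^ card A"
    unfolding fourier_coeff_def sum_divide_distrib sum_distrib_right
    by (simp add: walsh_commute ac_simps)
  also have "\<dots> = (\<Sum>y\<in>Pow A. g y * (\<Sum>S\<in>Pow A. walsh y S * walsh x S)) / 2 ^ card A"
    by (subst sum.swap) (simp add: sum_distrib_left)
  also have "\<dots> = (\<Sum>y\<in>Pow A. if y = x then g y * 2 ^ card A else 0) / 2 ^ card A"
    using assms by (intro arg_cong[where f = "\<lambda>s. s / _"] sum.cong refl) (simp add: walsh_orthogonal)
  also have "\<dots> = g x"
    using assms by simp
  finally show ?thesis .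
qed

lemma fourier_coeff_mult:
  assumes "finite A" "R \<subseteq> A"
  shows "fourier_coeff A (\<lambda>x. g x * h x) R =
    (\<Sum>S\<in>Pow A. fourier_coeff A g S * fourier_coeff A h (sym_diff S R))"
proof -
  have fin: "finite y" if "y \<in> Pow A" for y
    using that assms(1) finite_subset by auto
  have "(\<Sum>S\<in>Pow A. fourier_coeff A g S * fourier_coeff A h (sym_diff S R))
      = (\<Sum>S\<in>Pow A. \<Sum>y\<in>Pow A. fourier_coeff A g S * (h y * (walsh S y * walsh R y))) / 2 ^ card A"
    unfolding fourier_coeff_def[of A h] sum_divide_distrib sum_distrib_left
    by (intro sum.cong refl) (simp add: walsh_mult fin)
  also have "\<dots> = (\<Sum>y\<in>Pow A. h y * walsh R y * (\<Sum>S\<in>Pow A. fourier_coeff A g S * walsh S y)) / 2 ^ card A"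
    by (subst sum.swap) (simp add: sum_distrib_left ac_simps)
  also have "\<dots> = (\<Sum>y\<in>Pow A. h y * walsh R y * g y) / 2 ^ card A"
    using assms(1) by (intro arg_cong[where f = "\<lambda>s. s / _"] sum.cong refl) (simp add: fourier_inversion)
  also have "\<dots> = fourier_coeff A (\<lambda>x. g x * h x) R"
    by (simp add: fourier_coeff_def ac_simps)
  finally show ?thesis ..
qed

lemma sum_shift_product:
  assumes "finite A" "z \<subseteq> A"
  shows "(\<Sum>x\<in>Pow A. g x * g (sym_diff x z)) =
    2 ^ card A * (\<Sum>S\<in>Pow A. (fourier_coeff A g S)\<^sup>2 * walsh S z)"
proof -
  have fin: "finite S" if "S \<in> Pow A" for S
    using that assms(1) finite_subset by auto
  have inversion: "g (sym_diff x z) = (\<Sum>S\<in>Pow A. fourier_coeff A g S * (walsh S x * walsh S z))"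
    if "x \<subseteq> A" for x
  proof -
    have "g (sym_diff x z) = (\<Sum>S\<in>Pow A. fourier_coeff A g S * walsh S (sym_diff x z))"
      using fourier_inversion[OF assms(1), of "sym_diff x z" g] that assms(2) by (simp add: Diff_subset_conv le_supI2)
    also have "\<dots> = (\<Sum>S\<in>Pow A. fourier_coeff A g S * (walsh S x * walsh S z))"
      by (intro sum.cong refl) (simp add: walsh_sym_diff_right fin)
    finally show ?thesis .
  qed
  have "(\<Sum>x\<in>Pow A. g x * g (sym_diff x z))
      = (\<Sum>x\<in>Pow A. \<Sum>S\<in>Pow A. g x * (fourier_coeff A g S * (walsh S x * walsh S z)))"
    by (intro sum.cong refl) (simp add: inversion sum_distrib_left)
  also have "\<dots> = (\<Sum>S\<in>Pow A. fourier_coeff A g S * walsh S z * (\<Sum>x\<in>Pow A. g x * walsh S x))"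
    by (subst sum.swap) (simp add: sum_distrib_left ac_simps)
  also have "\<dots> = 2 ^ card A * (\<Sum>S\<in>Pow A. (fourier_coeff A g S)\<^sup>2 * walsh S z)"
  proof -
    have "(\<Sum>x\<in>Pow A. g x * walsh S x) = 2 ^ card A * fourier_coeff A g S" for S
      by (simp add: fourier_coeff_def)
    then show ?thesis
      by (simp add: sum_distrib_left power2_eq_square ac_simps)
  qed
  finally show ?thesis .
qed

lemma sum_walsh_subsets_of_card: "(\<Sum>z\<in>subsets_of_card A d. walsh S z) = sign_sum A S d"
  by (simp add: sign_sum_def walsh_def Int_commute)

text \<open>The quadratic form of the distance-\<open>d\<close> adjacency operator of the cube \<open>Pow A\<close>, which the
  Walsh characters diagonalise with eigenvalues \<open>sign_sum A S d\<close>.\<close>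

definition dist_correlation :: "'a set \<Rightarrow> ('a set \<Rightarrow> real) \<Rightarrow> nat \<Rightarrow> real" where
  "dist_correlation A g d = (\<Sum>x\<in>Pow A. \<Sum>z\<in>subsets_of_card A d. g x * g (sym_diff x z))"

lemma dist_correlation_0: "finite A \<Longrightarrow> dist_correlation A g 0 = (\<Sum>x\<in>Pow A. (g x)\<^sup>2)"
  by (simp add: dist_correlation_def subsets_of_card_0 power2_eq_square)

lemma dist_correlation_fourier:
  assumes "finite A"
  shows "dist_correlation A g d =
    2 ^ card A * (\<Sum>S\<in>Pow A. (fourier_coeff A g S)\<^sup>2 * sign_sum A S d)"
proof -
  have "dist_correlation A g d =
      (\<Sum>z\<in>subsets_of_card A d. 2 ^ card A * (\<Sum>S\<in>Pow A. (fourier_coeff A g S)\<^sup>2 * walsh S z))"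
    unfolding dist_correlation_def using assms
    by (subst sum.swap) (auto intro!: sum.cong simp: sum_shift_product)
  also have "\<dots> = 2 ^ card A * (\<Sum>S\<in>Pow A. (fourier_coeff A g S)\<^sup>2 * (\<Sum>z\<in>subsets_of_card A d. walsh S z))"
    by (simp add: sum_distrib_left sum.swap[of _ "subsets_of_card A d"])
  also have "\<dots> = 2 ^ card A * (\<Sum>S\<in>Pow A. (fourier_coeff A g S)\<^sup>2 * sign_sum A S d)"
    by (simp add: sum_walsh_subsets_of_card)
  finally show ?thesis .
qed

lemma dist_correlation_gap:
  assumes "finite A"
  shows "dist_correlation A g k - \<mu> * dist_correlation A g 0 =
    2 ^ card A * (\<Sum>S\<in>Pow A. (fourier_coeff A g S)\<^sup>2 * (sign_sum A S k - \<mu>))"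
  using assms by (simp add: dist_correlation_fourier sign_sum_0 sum_subtractf sum_distrib_left algebra_simps)

lemma dist_correlation_lower_bound:
  assumes "finite A" "\<And>S. S \<subseteq> A \<Longrightarrow> \<mu> \<le> sign_sum A S k"
  shows "\<mu> * dist_correlation A g 0 \<le> dist_correlation A g k"
proof -
  have "0 \<le> (\<Sum>S\<in>Pow A. (fourier_coeff A g S)\<^sup>2 * (sign_sum A S k - \<mu>))"
    using assms(2) by (intro sum_nonneg mult_nonneg_nonneg) auto
  then show ?thesis
    using dist_correlation_gap[OF assms(1), of g k \<mu>] by (simp add: algebra_simps)
qed

lemma fourier_coeff_eq_0_if_dist_correlation_eq:
  assumes "finite A" "\<And>S. S \<subseteq> A \<Longrightarrow> \<mu> \<le> sign_sum A S k"
    and "dist_correlation A g k = \<mu> * dist_correlation A g 0"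
    and "S \<subseteq> A" "\<mu> < sign_sum A S k"
  shows "fourier_coeff A g S = 0"
proof -
  have "(\<Sum>S\<in>Pow A. (fourier_coeff A g S)\<^sup>2 * (sign_sum A S k - \<mu>)) = 0"
    using dist_correlation_gap[OF assms(1), of g k \<mu>] assms(3) by simp
  then have "(fourier_coeff A g S)\<^sup>2 * (sign_sum A S k - \<mu>) = 0"
    using assms by (subst (asm) sum_nonneg_eq_0_iff) auto
  then show ?thesis
    using assms(5) by simp
qed

lemma fourier_coeff_eq_0_if_flip_invariant:
  assumes "finite A" "S \<subseteq> A" "r \<in> S" "\<And>x. x \<subseteq> A \<Longrightarrow> g (sym_diff x {r}) = g x"
  shows "fourier_coeff A g S = 0"
proof -
  have "finite S" using assms(1,2) finite_subset by blast
  then have "(\<Sum>x\<in>Pow A. g x * walsh S x) = 0"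
    using assms by (intro sum_Pow_flip_antisymmetric[of r]) (auto simp: walsh_sym_diff_singleton)
  then show ?thesis
    by (simp add: fourier_coeff_def)
qed

section \<open>Boolean functions with Sidon spectrum\<close>

lemma boolean_fourier_coeff_autoconvolution:
  assumes "finite A" "\<And>x. x \<subseteq> A \<Longrightarrow> g x = 1 \<or> g x = -1" "R \<subseteq> A" "R \<noteq> {}"
  shows "(\<Sum>S\<in>Pow A. fourier_coeff A g S * fourier_coeff A g (sym_diff S R)) = 0"
proof -
  have "g x * g x = 1" if "x \<subseteq> A" for x
    using assms(2)[OF that] by auto
  then have "fourier_coeff A (\<lambda>x. g x * g x) R = (\<Sum>x\<in>Pow A. walsh R x) / 2 ^ card A"
    unfolding fourier_coeff_def by (intro arg_cong[where f = "\<lambda>s. s / _"] sum.cong) auto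
  then show ?thesis
    using fourier_coeff_mult[OF assms(1,3), of g g] sum_walsh[OF assms(1,3)] assms(4) by simp
qed

definition sidon :: "'a set set \<Rightarrow> bool" where
  "sidon F \<longleftrightarrow> (\<forall>S\<in>F. \<forall>T\<in>F. \<forall>S'\<in>F. \<forall>T'\<in>F.
     S \<noteq> T \<longrightarrow> sym_diff S' T' = sym_diff S T \<longrightarrow> S' = S \<and> T' = T \<or> S' = T \<and> T' = S)"

text \<open>For distinct frequencies \<open>S\<close>, \<open>T\<close> in the spectrum, the coefficient of \<open>g\<^sup>2 = 1\<close> at \<open>S \<triangle> T\<close> would
  be \<open>2 c(S) c(T) \<noteq> 0\<close>, since the Sidon property kills all other products.\<close>

lemma boolean_sidon_spectrum_unique:
  assumes "finite A" "\<And>x. x \<subseteq> A \<Longrightarrow> g x = 1 \<or> g x = -1" "sidon F"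
    and spectrum: "\<And>S. S \<subseteq> A \<Longrightarrow> fourier_coeff A g S \<noteq> 0 \<Longrightarrow> S \<in> F"
    and S: "S \<subseteq> A" "fourier_coeff A g S \<noteq> 0" and T: "T \<subseteq> A" "fourier_coeff A g T \<noteq> 0"
  shows "S = T"
proof (rule ccontr)
  let ?c = "fourier_coeff A g"
  assume "S \<noteq> T"
  define R where "R = sym_diff S T"
  have partner: "S' = S \<or> S' = T" if "S' \<subseteq> A" "?c S' \<noteq> 0" "?c (sym_diff S' R) \<noteq> 0" for S'
  proof -
    have "sym_diff S' R \<subseteq> A" using that S T unfolding R_def by blast
    then have "S \<in> F" "T \<in> F" "S' \<in> F" "sym_diff S' R \<in> F"
      using spectrum that S T by auto
    moreover have "sym_diff S' (sym_diff S' R) = R" by blast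
    ultimately show ?thesis
      using \<open>sidon F\<close> \<open>S \<noteq> T\<close> unfolding sidon_def R_def by blast
  qed
  have "(\<Sum>S'\<in>Pow A. ?c S' * ?c (sym_diff S' R)) = (\<Sum>S'\<in>{S, T}. ?c S' * ?c (sym_diff S' R))"
    using partner S T by (intro sum.mono_neutral_right) (use assms(1) in auto)
  also have "\<dots> = 2 * ?c S * ?c T"
  proof -
    have "sym_diff S R = T" "sym_diff T R = S" unfolding R_def by blast+
    then show ?thesis using \<open>S \<noteq> T\<close> by simp
  qed
  moreover have "R \<subseteq> A" "R \<noteq> {}"
    using \<open>S \<noteq> T\<close> S T unfolding R_def by blast+
  ultimately show False
    using boolean_fourier_coeff_autoconvolution[OF assms(1,2)] S T by auto
qed

lemma boolean_sidon_spectrum_is_character: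
  assumes "finite A" "\<And>x. x \<subseteq> A \<Longrightarrow> g x = 1 \<or> g x = -1" "sidon F"
    and spectrum: "\<And>S. S \<subseteq> A \<Longrightarrow> fourier_coeff A g S \<noteq> 0 \<Longrightarrow> S \<in> F"
  obtains S where "S \<in> F" "S \<subseteq> A" "\<And>x. x \<subseteq> A \<Longrightarrow> g x = g {} * walsh S x"
proof -
  let ?c = "fourier_coeff A g"
  obtain S0 where S0: "S0 \<subseteq> A" "?c S0 \<noteq> 0"
  proof (rule ccontr)
    assume "\<not> thesis"
    then have "\<forall>S\<in>Pow A. ?c S = 0"
      using that by blast
    then have "g {} = 0"
      using fourier_inversion[OF assms(1), of "{}" g] by simp
    then show False using assms(2)[of "{}"] by simp
  qed
  have g: "g x = ?c S0 * walsh S0 x" if "x \<subseteq> A" for x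
  proof -
    have "g x = (\<Sum>S\<in>Pow A. ?c S * walsh S x)"
      using fourier_inversion[OF assms(1) that] ..
    also have "\<dots> = ?c S0 * walsh S0 x"
      using boolean_sidon_spectrum_unique[OF assms _ _ S0] S0(1) assms(1)
      by (subst sum.mono_neutral_right[of _ "{S0}"]) auto
    finally show ?thesis .
  qed
  show thesis
    using that[of S0] S0 spectrum[OF S0] g[of "{}"] g by auto
qed

text \<open>A difference \<open>R = S \<triangle> T\<close> of two distinct members recovers the pair \<open>{S, T}\<close>:
  from two singletons when \<open>card R = 2\<close>, and as \<open>{V, V - R}\<close> otherwise.\<close>

lemma sidon_singletons_and_whole:
  assumes "finite V" "4 \<le> card V"
  shows "sidon (insert V ((\<lambda>a. {a}) ` V))"
proof -
  let ?F = "insert V ((\<lambda>a. {a}) ` V)"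
  define pair where "pair R = (if card R = 2 then (\<lambda>a. {a}) ` R else {V, V - R})" for R
  have singleton_first: "{S, T} = pair (sym_diff S T)"
    if S: "S \<in> (\<lambda>a. {a}) ` V" and T: "T \<in> ?F" and "S \<noteq> T" for S T
  proof -
    obtain a where a: "a \<in> V" "S = {a}" using S by blast
    show ?thesis
    proof (cases "T = V")
      case True
      have "card (V - {a}) \<ge> 3" using assms a by (simp add: card_Diff_singleton)
      then show ?thesis using a True by (auto simp: pair_def)
    next
      case False
      then obtain b where "b \<in> V" "T = {b}" "a \<noteq> b" using T \<open>S \<noteq> T\<close> a by auto
      then show ?thesis using a by (auto simp: pair_def)
    qed
  qed
  have pair: "{S, T} = pair (sym_diff S T)" if "S \<in> ?F" "T \<in> ?F" "S \<noteq> T" for S T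
    using that singleton_first[of S T] singleton_first[of T S]
    by (cases "S = V") (auto simp: insert_commute Un_commute)
  show ?thesis
    unfolding sidon_def
  proof (intro ballI impI)
    fix S T S' T'
    assume "S \<in> ?F" "T \<in> ?F" "S' \<in> ?F" "T' \<in> ?F" "S \<noteq> T" "sym_diff S' T' = sym_diff S T"
    moreover from this have "S' \<noteq> T'" by blast
    ultimately have "{S', T'} = {S, T}" using pair by metis
    then show "S' = S \<and> T' = T \<or> S' = T \<and> T' = S" by (simp add: doubleton_eq_iff)
  qed
qed

section \<open>Expanding maps of the even cube\<close>

lemma even_card_sym_diff:
  assumes "finite x" "finite z"
  shows "even (card (sym_diff x z)) \<longleftrightarrow> (even (card x) \<longleftrightarrow> even (card z))"
proof -
  have "card x = card (x - z) + card (x \<inter> z)" "card z = card (z - x) + card (x \<inter> z)"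
    "card (sym_diff x z) = card (x - z) + card (z - x)"
    using assms by (subst card_Un_disjoint[symmetric]; auto intro: arg_cong[where f = card])+
  then show ?thesis by auto
qed

lemma walsh_complement_even:
  assumes "finite U" "x \<subseteq> U" "even (card x)" "S \<subseteq> U"
  shows "walsh (U - S) x = walsh S x"
proof -
  have "finite x" using assms(1,2) finite_subset by blast
  moreover have "walsh U x = 1"
    using assms(2,3) by (simp add: walsh_def Int_absorb1)
  moreover have "sym_diff U S = U - S" using assms(4) by blast
  ultimately show ?thesis
    using walsh_mult[of x U S] by simp
qed

lemma sum_walsh_singleton_products:
  assumes "a \<subseteq> {..<N}" "b \<subseteq> {..<N}"
  shows "(\<Sum>i<N. walsh {i} a * walsh {i} b) = real N - 2 * real (card (sym_diff a b))"
proof -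
  define D where "D = sym_diff a b"
  have "walsh {i} a * walsh {i} b = 1 - 2 * (if i \<in> D then 1 else 0)" for i
    by (auto simp: walsh_singleton D_def)
  moreover have "{..<N} \<inter> D = D" using assms by (auto simp: D_def)
  then have "(\<Sum>i<N. if i \<in> D then 1 else 0 :: real) = card D"
    by (simp add: sum.inter_restrict[symmetric])
  ultimately show ?thesis
    by (simp add: sum_subtractf sum_distrib_left[symmetric] D_def)
qed

lemma card_filter_mem_eq_sum_fibres:
  assumes "finite I" "finite D"
  shows "card {i\<in>I. \<sigma> i \<in> D} = (\<Sum>j\<in>D. card {i\<in>I. \<sigma> i = j})"
proof -
  have "{i\<in>I. \<sigma> i \<in> D} = (\<Union>j\<in>D. {i\<in>I. \<sigma> i = j})" by blast
  also have "card \<dots> = (\<Sum>j\<in>D. card {i\<in>I. \<sigma> i = j})"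
    using assms by (intro card_UN_disjoint) auto
  finally show ?thesis .
qed

text \<open>If every \<open>k\<close>-subset of \<open>U\<close> has a preimage of the same size under \<open>\<sigma>\<close>, all fibres have the
  same size: exchange one point of a \<open>k\<close>-set for another, which needs \<open>k < card U\<close>.\<close>

lemma uniform_fibres:
  assumes "finite U" "finite I" "\<sigma> ` I \<subseteq> U" "0 < k" "k < card U"
    and "\<And>Z. Z \<subseteq> U \<Longrightarrow> card Z = k \<Longrightarrow> card {i\<in>I. \<sigma> i \<in> Z} = c"
  obtains m where "\<And>j. j \<in> U \<Longrightarrow> card {i\<in>I. \<sigma> i = j} = m" "card I = card U * m" "c = k * m"
proof -
  define m where "m j = card {i\<in>I. \<sigma> i = j}" for j
  have sum_m: "(\<Sum>j\<in>Z. m j) = c" if "Z \<subseteq> U" "card Z = k" for Z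
    using assms(6)[OF that] card_filter_mem_eq_sum_fibres[OF assms(2), of Z \<sigma>] that assms(1)
    by (simp add: m_def finite_subset)
  have m_const: "m j = m j'" if "j \<in> U" "j' \<in> U" for j j'
  proof (cases "j = j'")
    case False
    then have "k - 1 \<le> card (U - {j, j'})"
      using that assms(1,5) by (simp add: card_Diff_subset)
    then obtain Z where Z: "Z \<subseteq> U - {j, j'}" "card Z = k - 1" "finite Z"
      by (meson obtain_subset_with_card_n)
    have notin: "j \<notin> Z" "j' \<notin> Z" using Z(1) by blast+
    have "insert j Z \<subseteq> U" "card (insert j Z) = k" "insert j' Z \<subseteq> U" "card (insert j' Z) = k"
      using Z notin that assms(4) by auto
    then have "(\<Sum>a\<in>insert j Z. m a) = (\<Sum>a\<in>insert j' Z. m a)"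
      using sum_m by presburger
    with Z notin show ?thesis by simp
  qed simp
  obtain j0 where "j0 \<in> U" using assms(4,5) by fastforce
  then have m: "m j = m j0" if "j \<in> U" for j
    using m_const that by blast
  show thesis
  proof
    show "card {i\<in>I. \<sigma> i = j} = m j0" if "j \<in> U" for j
      using m[OF that] by (simp add: m_def)
    have "{i\<in>I. \<sigma> i \<in> U} = I" using assms(3) by blast
    then show "card I = card U * m j0"
      using card_filter_mem_eq_sum_fibres[OF assms(2,1), of \<sigma>] m by (simp add: m_def)
    obtain Z where "Z \<subseteq> U" "card Z = k"
      using assms(5) by (meson less_imp_le obtain_subset_with_card_n)
    then show "c = k * m j0"
      using sum_m[of Z] m by (auto simp: subset_iff)
  qed
qed

text \<open>Flipping the point \<open>0\<close> identifies \<open>Pow {..<n}\<close> two-to-one with the even cube, and \<open>even_rep\<close>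
  picks the even representative: functions on the even cube become functions on the whole cube
  that are invariant under this flip.\<close>

definition even_rep :: "nat set \<Rightarrow> nat set" where
  "even_rep x = (if even (card x) then x else sym_diff x {0})"

lemma even_rep_in_even_cube: "0 < n \<Longrightarrow> x \<subseteq> {..<n} \<Longrightarrow> even_rep x \<in> even_cube n"
  using even_card_sym_diff[of x "{0}"] finite_subset[of x "{..<n}"]
  by (auto simp: even_rep_def even_cube_def)

lemma even_rep_even_cube: "x \<in> even_cube n \<Longrightarrow> even_rep x = x"
  by (simp add: even_rep_def even_cube_def)

lemma even_rep_flip: "finite x \<Longrightarrow> even_rep (sym_diff x {0}) = even_rep x"
  using even_card_sym_diff[of x "{0}"] by (auto simp: even_rep_def)

lemma even_rep_sym_diff:
  "finite x \<Longrightarrow> finite z \<Longrightarrow> even (card z) \<Longrightarrow> even_rep (sym_diff x z) = sym_diff (even_rep x) z"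
  using even_card_sym_diff[of x z] by (auto simp: even_rep_def)

text \<open>All that is used of a homomorphism \<open>G \<rightarrow> G'\<close>: edges of length \<open>k\<close> go to pairs at distance
  at least \<open>k'\<close>.\<close>

locale cube_expansion =
  fixes n k n' k' :: nat and f :: "nat set \<Rightarrow> nat set"
  assumes even_k: "even k" and k_gt: "n + 1 < 2 * k" and k_lt: "k < n"
    and ratio: "n * k' = n' * k" and k'_pos: "0 < k'"
    and maps_to: "\<And>x. x \<in> even_cube n \<Longrightarrow> f x \<in> even_cube n'"
    and expands: "\<And>x y. x \<in> even_cube n \<Longrightarrow> y \<in> even_cube n \<Longrightarrow> hamming x y = k \<Longrightarrow>
      k' \<le> hamming (f x) (f y)"
begin

lemma k_ge_4: "4 \<le> k"
  using even_k k_gt k_lt by presburger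

definition coord :: "nat \<Rightarrow> nat set \<Rightarrow> real" where
  "coord i x = walsh {i} (f (even_rep x))"

lemma coord_pm: "coord i x = 1 \<or> coord i x = -1"
  by (simp add: coord_def walsh_singleton)

lemma coord_square: "(coord i x)\<^sup>2 = 1"
  using coord_pm[of i x] by auto

lemma coord_flip: "x \<subseteq> {..<n} \<Longrightarrow> coord i (sym_diff x {0}) = coord i x"
  by (simp add: coord_def even_rep_flip finite_subset)

lemma f_even_rep_subset: "x \<subseteq> {..<n} \<Longrightarrow> f (even_rep x) \<subseteq> {..<n'}"
  using maps_to[OF even_rep_in_even_cube, of x] k_lt by (auto simp: even_cube_def)

lemma edge_expansion:
  assumes "x \<subseteq> {..<n}" "z \<in> subsets_of_card {..<n} k"
  shows "k' \<le> hamming (f (even_rep x)) (f (even_rep (sym_diff x z)))"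
proof -
  have "finite x" "finite z" using assms finite_subset by auto
  then have "even_rep (sym_diff x z) = sym_diff (even_rep x) z"
    using assms even_k by (simp add: even_rep_sym_diff)
  moreover have "sym_diff (even_rep x) (sym_diff (even_rep x) z) = z" by blast
  moreover have "sym_diff x z \<subseteq> {..<n}" using assms by blast
  ultimately show ?thesis
    using assms k_lt by (intro expands even_rep_in_even_cube) (auto simp: hamming_def)
qed

abbreviation edge_dist :: "nat set \<Rightarrow> nat set \<Rightarrow> nat" where
  "edge_dist x z \<equiv> hamming (f (even_rep x)) (f (even_rep (sym_diff x z)))"

lemma sum_coord_dist_correlation:
  "(\<Sum>i<n'. dist_correlation {..<n} (coord i) k) =
    (\<Sum>x\<in>Pow {..<n}. \<Sum>z\<in>subsets_of_card {..<n} k. real n' - 2 * real (edge_dist x z))"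
proof -
  have "(\<Sum>i<n'. dist_correlation {..<n} (coord i) k) =
      (\<Sum>x\<in>Pow {..<n}. \<Sum>z\<in>subsets_of_card {..<n} k. \<Sum>i<n'. coord i x * coord i (sym_diff x z))"
    unfolding dist_correlation_def
    by (subst sum.swap, subst (2) sum.swap) simp
  also have "\<dots> = (\<Sum>x\<in>Pow {..<n}. \<Sum>z\<in>subsets_of_card {..<n} k. real n' - 2 * real (edge_dist x z))"
  proof (intro sum.cong refl)
    fix x z assume "x \<in> Pow {..<n}" "z \<in> subsets_of_card {..<n} k"
    then have "x \<subseteq> {..<n}" "sym_diff x z \<subseteq> {..<n}" by auto
    then show "(\<Sum>i<n'. coord i x * coord i (sym_diff x z)) = real n' - 2 * real (edge_dist x z)"
      unfolding coord_def hamming_def by (intro sum_walsh_singleton_products f_even_rep_subset)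
  qed
  finally show ?thesis .
qed

lemma krawtchouk_1_le_sign_sum: "S \<subseteq> {..<n} \<Longrightarrow> krawtchouk n k 1 \<le> sign_sum {..<n} S k"
  using krawtchouk_min_at_1(1)[OF even_k k_gt k_lt, of "card S"] card_mono[of "{..<n}" S]
  by (simp add: sign_sum_eq_krawtchouk)

lemma dist_correlation_coord_0: "dist_correlation {..<n} (coord i) 0 = 2 ^ n"
  by (simp add: dist_correlation_0 card_Pow coord_square)

lemma dist_correlation_coord_ge: "of_int (krawtchouk n k 1) * 2 ^ n \<le> dist_correlation {..<n} (coord i) k"
  using dist_correlation_lower_bound[OF finite_lessThan krawtchouk_1_le_sign_sum, of "coord i"]
  by (simp add: dist_correlation_coord_0)

text \<open>The ratio \<open>n'/k' = n/k\<close> is exactly what makes the total budget of the coordinates equal to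
  \<open>n'\<close> times the spectral lower bound of each of them.\<close>

lemma edge_budget_eq_lower_bound:
  "real (card (Pow {..<n})) * real (card (subsets_of_card {..<n} k)) * (real n' - 2 * real k') =
    real n' * (of_int (krawtchouk n k 1) * 2 ^ n)"
proof -
  have ratio_real: "real n * real k' = real n' * real k"
    using ratio by (simp flip: of_nat_mult)
  have "real n * (real (n choose k) * (real n' - 2 * real k')) =
      real (n choose k) * (real n * real n') - 2 * real (n choose k) * (real n * real k')"
    by (simp add: algebra_simps)
  also have "\<dots> = real n' * (real (n choose k) * (real n - 2 * real k))"
    unfolding ratio_real by (simp add: algebra_simps)
  also have "\<dots> = real n * (real n' * krawtchouk n k 1)"
    using krawtchouk_1_closed_form[of k n] k_ge_4 k_lt by simp
  finally show ?thesis
    using k_lt by (simp add: card_Pow n_subsets)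
qed

lemma rigidity:
  shows "\<And>i. i < n' \<Longrightarrow> dist_correlation {..<n} (coord i) k = of_int (krawtchouk n k 1) * 2 ^ n"
    and "\<And>x z. x \<subseteq> {..<n} \<Longrightarrow> z \<in> subsets_of_card {..<n} k \<Longrightarrow> edge_dist x z = k'"
proof -
  let ?P = "Pow {..<n}" and ?Z = "subsets_of_card {..<n} k"
  let ?lower = "real_of_int (krawtchouk n k 1) * 2 ^ n"
  have lower: "(\<Sum>i<n'. ?lower) \<le> (\<Sum>i<n'. dist_correlation {..<n} (coord i) k)"
    by (intro sum_mono dist_correlation_coord_ge)
  have inner_le: "(\<Sum>z\<in>?Z. real n' - 2 * real (edge_dist x z)) \<le> (\<Sum>z\<in>?Z. real n' - 2 * real k')"
    if "x \<subseteq> {..<n}" for x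
    using edge_expansion that by (intro sum_mono) auto
  then have upper: "(\<Sum>x\<in>?P. \<Sum>z\<in>?Z. real n' - 2 * real (edge_dist x z)) \<le>
      (\<Sum>x\<in>?P. \<Sum>z\<in>?Z. real n' - 2 * real k')"
    by (rule sum_mono) auto
  have budget: "(\<Sum>x\<in>?P. \<Sum>z\<in>?Z. real n' - 2 * real k') = (\<Sum>i<n'. ?lower)"
    using edge_budget_eq_lower_bound by simp
  have tight: "(\<Sum>i<n'. dist_correlation {..<n} (coord i) k) = (\<Sum>i<n'. ?lower)"
    "(\<Sum>x\<in>?P. \<Sum>z\<in>?Z. real n' - 2 * real (edge_dist x z)) = (\<Sum>x\<in>?P. \<Sum>z\<in>?Z. real n' - 2 * real k')"
    using lower upper budget sum_coord_dist_correlation by linarith+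
  show "dist_correlation {..<n} (coord i) k = ?lower" if "i < n'" for i
    using sum_mono_inv[OF tight(1)[symmetric], of i] dist_correlation_coord_ge that by simp
  show "edge_dist x z = k'" if x: "x \<subseteq> {..<n}" and z: "z \<in> ?Z" for x z
  proof -
    have "(\<Sum>z\<in>?Z. real n' - 2 * real (edge_dist x z)) = (\<Sum>z\<in>?Z. real n' - 2 * real k')"
      by (rule sum_mono_inv[OF tight(2)]) (use inner_le x in auto)
    then have "real n' - 2 * real (edge_dist x z) = real n' - 2 * real k'"
      by (rule sum_mono_inv) (use edge_expansion x z finite_subsets_of_card in auto)
    then show ?thesis by simp
  qed
qed

lemma coord_spectrum:
  assumes "i < n'" "S \<subseteq> {..<n}" "fourier_coeff {..<n} (coord i) S \<noteq> 0"
  shows "S \<in> insert ({..<n} - {0}) ((\<lambda>a. {a}) ` ({..<n} - {0}))"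
proof -
  have "0 \<notin> S"
    using fourier_coeff_eq_0_if_flip_invariant[of "{..<n}" S 0 "coord i"] coord_flip assms(2,3) by auto
  have "card S = 1 \<or> card S = n - 1"
  proof (rule ccontr)
    assume "\<not> ?thesis"
    moreover have "card S \<le> n" using card_mono[OF _ assms(2)] by simp
    ultimately have "krawtchouk n k 1 < sign_sum {..<n} S k"
      using krawtchouk_min_at_1(2)[OF even_k k_gt k_lt] assms(2) by (simp add: sign_sum_eq_krawtchouk)
    then have "fourier_coeff {..<n} (coord i) S = 0"
      using rigidity(1)[OF assms(1)] assms(2) krawtchouk_1_le_sign_sum
      by (intro fourier_coeff_eq_0_if_dist_correlation_eq[of _ "krawtchouk n k 1" k])
        (simp_all add: dist_correlation_coord_0)
    with assms(3) show False ..
  qed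
  then show ?thesis
  proof
    assume "card S = 1"
    then show ?thesis using \<open>0 \<notin> S\<close> assms(2) by (auto simp: card_1_singleton_iff)
  next
    assume "card S = n - 1"
    then have "S = {..<n} - {0}"
      using \<open>0 \<notin> S\<close> assms(2) k_lt by (intro card_subset_eq) auto
    then show ?thesis by simp
  qed
qed

lemma coord_dictator:
  assumes "i < n'"
  obtains j where "j < n" "\<And>x. x \<in> even_cube n \<Longrightarrow> walsh {i} (f x) = walsh {i} (f {}) * walsh {j} x"
proof -
  let ?V = "{..<n} - {0}"
  have sidon: "sidon (insert ?V ((\<lambda>a. {a}) ` ?V))"
    using k_ge_4 k_lt by (intro sidon_singletons_and_whole) auto
  obtain S where S: "S \<in> insert ?V ((\<lambda>a. {a}) ` ?V)" "S \<subseteq> {..<n}"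
    and character: "\<And>x. x \<subseteq> {..<n} \<Longrightarrow> coord i x = coord i {} * walsh S x"
    by (rule boolean_sidon_spectrum_is_character[OF finite_lessThan coord_pm sidon coord_spectrum[OF assms]]) auto
  have coord_even: "coord i x = walsh {i} (f x)" if "x \<in> even_cube n" for x
    using that by (simp add: coord_def even_rep_even_cube)
  have "{} \<in> even_cube n" by (simp add: even_cube_def)
  from S(1) obtain j where j: "j < n" "\<And>x. x \<in> even_cube n \<Longrightarrow> walsh S x = walsh {j} x"
  proof
    assume "S = ?V"
    then have "walsh S x = walsh {0} x" if "x \<in> even_cube n" for x
      using that walsh_complement_even[of "{..<n}" x "{0}"] k_lt by (auto simp: even_cube_def atLeast0LessThan)
    then show thesis using that[of 0] k_lt by simp
  qed (use that in auto)
  show thesis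
  proof (rule that[OF j(1)])
    fix x assume "x \<in> even_cube n"
    moreover from this have "x \<subseteq> {..<n}" by (auto simp: even_cube_def)
    ultimately show "walsh {i} (f x) = walsh {i} (f {}) * walsh {j} x"
      using character[of x] character[of "{}"] coord_even[of x] coord_even[of "{}"] j(2)[of x]
        \<open>{} \<in> even_cube n\<close> by simp
  qed
qed

lemma hamming_f_eq_card_preimage:
  obtains \<sigma> where "\<sigma> ` {..<n'} \<subseteq> {..<n}"
    "\<And>x y. x \<in> even_cube n \<Longrightarrow> y \<in> even_cube n \<Longrightarrow>
      hamming (f x) (f y) = card {i\<in>{..<n'}. \<sigma> i \<in> sym_diff x y}"
proof -
  have "\<forall>i\<in>{..<n'}. \<exists>j. j < n \<and> (\<forall>x\<in>even_cube n. walsh {i} (f x) = walsh {i} (f {}) * walsh {j} x)"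
    using coord_dictator by (metis lessThan_iff)
  then obtain \<sigma> where \<sigma>: "\<And>i. i < n' \<Longrightarrow> \<sigma> i < n"
    and dictator: "\<And>i x. i < n' \<Longrightarrow> x \<in> even_cube n \<Longrightarrow> walsh {i} (f x) = walsh {i} (f {}) * walsh {\<sigma> i} x"
    by (metis lessThan_iff bchoice)
  have sym_diff_image: "sym_diff (f x) (f y) = {i\<in>{..<n'}. \<sigma> i \<in> sym_diff x y}"
    if "x \<in> even_cube n" "y \<in> even_cube n" for x y
  proof -
    have "f x \<subseteq> {..<n'}" "f y \<subseteq> {..<n'}"
      using maps_to[OF that(1)] maps_to[OF that(2)] by (auto simp: even_cube_def)
    moreover have "i \<in> sym_diff (f x) (f y) \<longleftrightarrow> \<sigma> i \<in> sym_diff x y" if "i < n'" for i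
      using dictator[OF that \<open>x \<in> even_cube n\<close>] dictator[OF that \<open>y \<in> even_cube n\<close>]
      by (auto simp: walsh_singleton split: if_splits)
    ultimately show ?thesis by auto
  qed
  show thesis
  proof (rule that)
    show "\<sigma> ` {..<n'} \<subseteq> {..<n}" using \<sigma> by auto
  next
    fix x y assume "x \<in> even_cube n" "y \<in> even_cube n"
    then show "hamming (f x) (f y) = card {i\<in>{..<n'}. \<sigma> i \<in> sym_diff x y}"
      using sym_diff_image by (simp add: hamming_def)
  qed
qed

theorem multiple_and_injective: "n dvd n' \<and> k dvd k' \<and> inj_on f (even_cube n)"
proof -
  obtain \<sigma> where \<sigma>: "\<sigma> ` {..<n'} \<subseteq> {..<n}"
    and dist: "\<And>x y. x \<in> even_cube n \<Longrightarrow> y \<in> even_cube n \<Longrightarrow>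
      hamming (f x) (f y) = card {i\<in>{..<n'}. \<sigma> i \<in> sym_diff x y}"
    by (rule hamming_f_eq_card_preimage) auto
  have "card {i\<in>{..<n'}. \<sigma> i \<in> Z} = k'" if "Z \<subseteq> {..<n}" "card Z = k" for Z
  proof -
    have "{} \<in> even_cube n" "Z \<in> even_cube n"
      using that even_k by (auto simp: even_cube_def)
    then show ?thesis
      using rigidity(2)[of "{}" Z] that dist[of "{}" Z] by (simp add: even_rep_even_cube)
  qed
  then obtain m where m: "\<And>j. j < n \<Longrightarrow> card {i\<in>{..<n'}. \<sigma> i = j} = m" "n' = n * m" "k' = k * m"
    using uniform_fibres[of "{..<n}" "{..<n'}" \<sigma> k k'] \<sigma> k_ge_4 k_lt by auto
  have "x = y" if "x \<in> even_cube n" "y \<in> even_cube n" "f x = f y" for x y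
  proof -
    define D where "D = sym_diff x y"
    have D: "finite D" "D \<subseteq> {..<n}"
      using that by (auto simp: even_cube_def D_def atLeast0LessThan dest: finite_subset)
    have "0 = card {i\<in>{..<n'}. \<sigma> i \<in> D}"
      using dist[OF that(1,2)] that(3) by (simp add: hamming_def D_def)
    also have "\<dots> = (\<Sum>j\<in>D. card {i\<in>{..<n'}. \<sigma> i = j})"
      using card_filter_mem_eq_sum_fibres[OF finite_lessThan D(1)] .
    also have "\<dots> = m * card D"
      using D m(1) by (simp add: subset_iff)
    finally have "card D = 0" using m(3) k'_pos by simp
    then show "x = y" using D by (auto simp: D_def)
  qed
  then show ?thesis
    using m(2,3) by (simp add: inj_on_def)
qed

end

theorem theorem5p4:
  fixes n k n' k' :: nat
    and E E' :: "nat set \<Rightarrow> nat set \<Rightarrow> bool"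
    and f :: "nat set \<Rightarrow> nat set"
  assumes "real (n + 1) / 2 < real k" and "k < n"
    and "real n / real k = real n' / real k'"
    and "even k" and "even k'"
    and "between_graph n k E" and "between_graph n' k' E'"
    and "graph_hom (even_cube n) E (even_cube n') E' f"
  shows "n dvd n' \<and> k dvd k' \<and> inj_on f (even_cube n)"
proof -
  have "real (n + 1) < real (2 * k)"
    using assms(1) by simp
  then have k_gt: "n + 1 < 2 * k"
    by (simp only: of_nat_less_iff)
  moreover have k'_pos: "0 < k'"
    using assms(2,3) k_gt by (cases "k' = 0") auto
  moreover have "n * k' = n' * k"
    using assms(3) k_gt k'_pos by (simp add: field_simps flip: of_nat_mult)
  moreover have "k' \<le> hamming (f x) (f y)"
    if "x \<in> even_cube n" "y \<in> even_cube n" "hamming x y = k" for x y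
  proof -
    have "E x y" using assms(6) that unfolding between_graph_def by blast
    then have "E' (f x) (f y)" using assms(8) that(1,2) unfolding graph_hom_def by blast
    then show ?thesis using assms(7) unfolding between_graph_def by blast
  qed
  ultimately interpret cube_expansion n k n' k' f
    using assms(2,4,8) by unfold_locales (auto simp: graph_hom_def)
  show ?thesis
    by (rule multiple_and_injective)
qed

end
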